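(* Let $H_A,H_B$ be complex Hilbert spaces of dimensions $d_A,d_B$. Let $\Pi_{A1},\dots,\Pi_{A\mathfrak a}$ be orthogonal projectors on $H_A$ with $\Pi_{Aa}\Pi_{Ac}=\delta_{ac}\Pi_{Aa}$ and $\sum_a\Pi_{Aa}=\mathbf 1_A$, and $\Pi_{B1},\dots,\Pi_{B\mathfrak b}$ orthogonal projectors on $H_B$ with $\Pi_{Bb}\Pi_{Bd}=\delta_{bd}\Pi_{Bb}$ and $\sum_b\Pi_{Bb}=\mathbf 1_B$. For a unit vector $\ket s\in H_A\otimes H_B$ let $p_{ab}=\bra s(\Pi_{Aa}\otimes\Pi_{Bb})\ket s$ and $\mathcal R_{ab}=\mathrm{rank}(\ket s)-\mathrm{rank}[(\Pi_{Aa}\otimes\Pi_{Bb})\ket s]$. Then $\sum_{a,b}p_{ab}\mathcal R_{ab}\le (d_A+d_B)-\sum_{a,b}p_{ab}\,[\mathrm{Tr}(\Pi_{Aa})+\mathrm{Tr}(\Pi_{Bb})].$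
   Context: The rank of a vector $\ket s\in H_A\otimes H_B$ is its Schmidt rank: the least $n$ such that $\ket s=\sum_{i=1}^n\ket{a_i}\otimes\ket{b_i}$ with $\ket{a_i}\in H_A,\ket{b_i}\in H_B$; the zero vector has rank $0$. *)

theory Defs
  imports "HOL-Analysis.Analysis"
begin

text \<open>Finite-dimensional complex Hilbert spaces H_A = complex^'a, H_B = complex^'b
  (dimensions CARD('a), CARD('b)); H_A tensor H_B = complex^('a \<times> 'b).\<close>

definition cinner_vec :: "complex^'n \<Rightarrow> complex^'n \<Rightarrow> complex" where
  "cinner_vec u v = (\<Sum>i\<in>UNIV. cnj (u $ i) * v $ i)"

definition mat_adj :: "complex^'n^'n \<Rightarrow> complex^'n^'n" where
  "mat_adj P = (\<chi> i j. cnj (P $ j $ i))"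

definition orth_projector :: "complex^'n^'n \<Rightarrow> bool" where
  "orth_projector P \<longleftrightarrow> P ** P = P \<and> mat_adj P = P"

definition tensor_vec :: "complex^'a \<Rightarrow> complex^'b \<Rightarrow> complex^('a \<times> 'b)" where
  "tensor_vec u v = (\<chi> p. u $ fst p * v $ snd p)"

definition tensor_op :: "complex^'a^'a \<Rightarrow> complex^'b^'b \<Rightarrow> complex^('a \<times> 'b) \<Rightarrow> complex^('a \<times> 'b)" where
  "tensor_op M N s = (\<chi> p. \<Sum>q\<in>UNIV. M $ fst p $ fst q * N $ snd p $ snd q * s $ q)"

definition schmidt_rank :: "complex^(('a::finite) \<times> ('b::finite)) \<Rightarrow> nat" where
  "schmidt_rank s = (LEAST n. \<exists>(u::nat \<Rightarrow> complex^'a) (v::nat \<Rightarrow> complex^'b).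
      s = (\<Sum>i<n. tensor_vec (u i) (v i)))"

end

theory Submission
  imports Defs
begin

text \<open>
  Fix one outcome with projectors P and Q and split
  s = (P \<otimes> Q) s + ((1 - P) \<otimes> Q) s + (1 \<otimes> (1 - Q)) s.
  Applying M \<otimes> N to a vector yields a sum of at most (column rank of M) product vectors, and
  the column rank of the idempotent 1 - P equals its trace d_A - Tr P. Subadditivity of the
  Schmidt rank therefore bounds the rank drop of every outcome by d_A + d_B - Tr P - Tr Q;
  multiplying by the probability of the outcome and summing (the probabilities add up to 1)
  gives the theorem.
\<close>

text \<open>The library's \<open>rank\<close> is the row rank, and its agreement with the column rank is only
  proved over the reals.\<close>

definition col_rank :: "'a::field^'n^'m \<Rightarrow> nat" where
  "col_rank A = vec.dim (columns A)"

lemma column_basis_factorization: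
  fixes M :: "'a::field^'n^'m"
  obtains B g where "B \<subseteq> columns M" "vec.independent B" "finite B" "card B = col_rank M"
    "\<And>i j. M$i$j = (\<Sum>b\<in>B. g b j * b$i)"
proof -
  obtain B where BC: "B \<subseteq> columns M" and ind: "vec.independent B"
    and sp: "columns M \<subseteq> vec.span B" and card: "card B = col_rank M"
    using vec.basis_exists[of "columns M"] unfolding col_rank_def by metis
  have fin: "finite B" using ind by (rule vec.finiteI_independent)
  have "\<forall>j. \<exists>c. column j M = (\<Sum>b\<in>B. c b *s b)"
    using sp vec.span_finite[OF fin] by (auto simp: columns_def)
  then obtain c where c: "\<And>j. column j M = (\<Sum>b\<in>B. c j b *s b)" by metis
  show ?thesis
  proof (rule that[OF BC ind fin card])
    fix i j
    have "M$i$j = column j M $ i" by (simp add: column_def)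
    then show "M$i$j = (\<Sum>b\<in>B. c j b * b$i)" by (simp add: c sum_component)
  qed
qed

lemma trace_idempotent:
  fixes M :: "'a::field^'n^'n"
  assumes idem: "M ** M = M"
  shows "trace M = of_nat (col_rank M)"
proof -
  obtain B g where BC: "B \<subseteq> columns M" and ind: "vec.independent B" and fin: "finite B"
    and card: "card B = col_rank M" and M: "\<And>i j. M$i$j = (\<Sum>b\<in>B. g b j * b$i)"
    by (fact column_basis_factorization)
  have fixed: "M *v b = b" if bB: "b \<in> B" for b
  proof -
    obtain j where b: "b = column j M" using bB BC unfolding columns_def by blast
    have "M *v b = column j (M ** M)"
      by (simp add: b vec_eq_iff column_def matrix_vector_mult_def matrix_matrix_mult_def)
    then show ?thesis by (simp add: idem b)
  qed
  \<comment> \<open>M fixes every basis column, and the coordinates of M b0 in the basis B are unique.\<close>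
  have diag: "(\<Sum>j\<in>UNIV. g b0 j * b0$j) = 1" if b0: "b0 \<in> B" for b0
  proof -
    define c where "c b = (\<Sum>j\<in>UNIV. g b j * b0$j)" for b
    have "(\<Sum>b\<in>B. c b *s b) $ i = (M *v b0) $ i" for i
    proof -
      have "(\<Sum>b\<in>B. c b *s b) $ i = (\<Sum>b\<in>B. \<Sum>j\<in>UNIV. g b j * b$i * b0$j)"
        by (simp add: c_def sum_component sum_distrib_left sum_distrib_right mult_ac)
      also have "\<dots> = (\<Sum>j\<in>UNIV. \<Sum>b\<in>B. g b j * b$i * b0$j)"
        by (rule sum.swap)
      also have "\<dots> = (M *v b0) $ i"
        by (simp add: matrix_vector_mult_def M sum_distrib_right)
      finally show ?thesis .
    qed
    moreover have "(\<Sum>b\<in>B. (if b = b0 then 1 else 0) *s b) = b0"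
    proof -
      have "(if b = b0 then 1 else 0) *s b = (if b = b0 then b else 0)" for b :: "'a^'n"
        by simp
      then show ?thesis using fin b0 by simp
    qed
    ultimately have "(\<Sum>b\<in>B. c b *s b) = (\<Sum>b\<in>B. (if b = b0 then 1 else 0) *s b)"
      using fixed[OF b0] by (simp add: vec_eq_iff)
    then have "(\<Sum>b\<in>B. (c b - (if b = b0 then 1 else 0)) *s b) = 0"
      by (simp add: vec.scale_left_diff_distrib sum_subtractf)
    then have "c b0 - 1 = 0"
      using ind b0 unfolding vec.independent_explicit by fastforce
    then show ?thesis by (simp add: c_def)
  qed
  have "trace M = (\<Sum>i\<in>UNIV. \<Sum>b\<in>B. g b i * b$i)" by (simp add: trace_def M)
  also have "\<dots> = (\<Sum>b\<in>B. \<Sum>i\<in>UNIV. g b i * b$i)" by (rule sum.swap)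
  also have "\<dots> = of_nat (col_rank M)" by (simp add: diag card)
  finally show ?thesis .
qed

lemma matrix_diff_ldistrib: "A ** (B - C) = A ** B - A ** C"
  for A :: "'a::ring_1^'n^'m"
  by (simp add: vec_eq_iff matrix_matrix_mult_def sum_subtractf right_diff_distrib)

lemma matrix_diff_rdistrib: "(A - B) ** C = A ** C - B ** C"
  for A :: "'a::ring_1^'n^'m"
  by (simp add: vec_eq_iff matrix_matrix_mult_def sum_subtractf left_diff_distrib)

lemma trace_idempotent_complement:
  fixes P :: "'a::field^'n^'n"
  assumes "P ** P = P"
  shows "trace P = of_nat CARD('n) - of_nat (col_rank (mat 1 - P))"
proof -
  have "(mat 1 - P) ** (mat 1 - P) = mat 1 - P"
    using assms by (simp add: matrix_diff_ldistrib matrix_diff_rdistrib)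
  then have "trace (mat 1 - P) = of_nat (col_rank (mat 1 - P))"
    by (rule trace_idempotent)
  then show ?thesis by (simp add: trace_sub trace_I algebra_simps)
qed

lemma sum_tensor_vec_reindex_nat:
  assumes "finite I"
  obtains u' v' where "(\<Sum>i\<in>I. tensor_vec (u i) (v i)) = (\<Sum>i<card I. tensor_vec (u' i) (v' i))"
proof -
  obtain h where h: "bij_betw h {..<card I} I"
    using ex_bij_betw_nat_finite[OF assms] by (auto simp: atLeast0LessThan)
  show ?thesis
    by (rule that[of "u \<circ> h" "v \<circ> h"]) (simp add: sum.reindex_bij_betw[OF h, symmetric])
qed

lemma schmidt_rank_le_card:
  fixes s :: "complex^('a::finite \<times> 'b::finite)"
  assumes "finite I" and "s = (\<Sum>i\<in>I. tensor_vec (u i) (v i))"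
  shows "schmidt_rank s \<le> card I"
proof -
  obtain u' v' where "s = (\<Sum>i<card I. tensor_vec (u' i) (v' i))"
    using sum_tensor_vec_reindex_nat[OF assms(1)] assms(2) by metis
  then show ?thesis unfolding schmidt_rank_def by (intro Least_le) blast
qed

lemma schmidt_decomposition:
  fixes s :: "complex^('a::finite \<times> 'b::finite)"
  obtains u v where "s = (\<Sum>i<schmidt_rank s. tensor_vec (u i) (v i))"
proof -
  define e :: "'a \<Rightarrow> complex^'a" where "e a = (\<chi> x. if x = a then 1 else 0)" for a
  have delta: "(if x = a then 1 else 0) * c = (if x = a then c else 0)" for x a and c :: complex
    by simp
  have s: "s = (\<Sum>a\<in>UNIV. tensor_vec (e a) (\<chi> y. s $ (a, y)))"
    by (simp add: vec_eq_iff sum_component tensor_vec_def e_def delta)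
  obtain u v where "(\<Sum>a\<in>UNIV. tensor_vec (e a) (\<chi> y. s $ (a, y))) =
                    (\<Sum>i<CARD('a). tensor_vec (u i) (v i))"
    by (rule sum_tensor_vec_reindex_nat[OF finite_class.finite_UNIV])
  then have "s = (\<Sum>i<CARD('a). tensor_vec (u i) (v i))"
    by (rule trans[OF s])
  then have "\<exists>(n::nat) u v. s = (\<Sum>i<n. tensor_vec (u i) (v i))" by blast
  then have "\<exists>u v. s = (\<Sum>i<schmidt_rank s. tensor_vec (u i) (v i))"
    unfolding schmidt_rank_def by (rule LeastI_ex)
  with that show ?thesis by blast
qed

lemma schmidt_rank_add_le:
  fixes x y :: "complex^('a::finite \<times> 'b::finite)"
  shows "schmidt_rank (x + y) \<le> schmidt_rank x + schmidt_rank y"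
proof -
  obtain u1 v1 where x: "x = (\<Sum>i<schmidt_rank x. tensor_vec (u1 i) (v1 i))"
    by (rule schmidt_decomposition)
  obtain u2 v2 where y: "y = (\<Sum>i<schmidt_rank y. tensor_vec (u2 i) (v2 i))"
    by (rule schmidt_decomposition)
  have "(\<Sum>i\<in>{..<schmidt_rank x} <+> {..<schmidt_rank y}.
            tensor_vec (case_sum u1 u2 i) (case_sum v1 v2 i)) =
        (\<Sum>i<schmidt_rank x. tensor_vec (u1 i) (v1 i)) + (\<Sum>i<schmidt_rank y. tensor_vec (u2 i) (v2 i))"
    by (subst sum.Plus) (simp_all add: comp_def)
  then have "x + y = (\<Sum>i\<in>{..<schmidt_rank x} <+> {..<schmidt_rank y}.
                       tensor_vec (case_sum u1 u2 i) (case_sum v1 v2 i))"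
    by (simp only: x[symmetric] y[symmetric])
  from schmidt_rank_le_card[OF _ this] show ?thesis by (simp add: card_Plus)
qed

lemma tensor_op_add_left: "tensor_op (M + M') N s = tensor_op M N s + tensor_op M' N s"
  by (simp add: vec_eq_iff tensor_op_def distrib_right sum.distrib)

lemma tensor_op_add_right: "tensor_op M (N + N') s = tensor_op M N s + tensor_op M N' s"
  by (simp add: vec_eq_iff tensor_op_def distrib_right distrib_left sum.distrib)

lemma tensor_op_sum_left: "tensor_op (\<Sum>a\<in>A. f a) N s = (\<Sum>a\<in>A. tensor_op (f a) N s)"
  unfolding vec_eq_iff tensor_op_def
  by (simp add: sum_component sum_distrib_right sum.swap[of _ A])

lemma tensor_op_sum_right: "tensor_op M (\<Sum>b\<in>B. f b) s = (\<Sum>b\<in>B. tensor_op M (f b) s)"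
  unfolding vec_eq_iff tensor_op_def
  by (simp add: sum_component sum_distrib_right sum_distrib_left sum.swap[of _ B])

lemma tensor_op_mat_1: "tensor_op (mat 1) (mat 1) s = s"
proof -
  have "(\<Sum>q\<in>UNIV. (mat 1 :: complex^'a^'a) $ fst p $ fst q * (mat 1 :: complex^'b^'b) $ snd p $ snd q * s $ q)
        = (\<Sum>q\<in>UNIV. if q = p then s $ q else 0)" for p :: "'a \<times> 'b"
    by (rule sum.cong) (auto simp: mat_def prod_eq_iff)
  then show ?thesis by (simp add: vec_eq_iff tensor_op_def)
qed

lemma tensor_op_tensor_op: "tensor_op M N (tensor_op M' N' s) = tensor_op (M ** M') (N ** N') s"
proof -
  have factor: "(M ** M')$i$k * (N ** N')$j$l
      = (\<Sum>q\<in>UNIV. M$i$fst q * N$j$snd q * (M'$fst q$k * N'$snd q$l))" for i k j l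
  proof -
    have "(M ** M')$i$k * (N ** N')$j$l
        = (\<Sum>(x, y)\<in>UNIV \<times> UNIV. M$i$x * M'$x$k * (N$j$y * N'$y$l))"
      by (simp add: matrix_matrix_mult_def sum_product sum.cartesian_product)
    then show ?thesis by (simp add: UNIV_Times_UNIV case_prod_beta mult_ac)
  qed
  have "(tensor_op M N (tensor_op M' N' s))$p = (tensor_op (M ** M') (N ** N') s)$p" for p
  proof -
    have "(tensor_op M N (tensor_op M' N' s))$p
        = (\<Sum>q\<in>UNIV. \<Sum>r\<in>UNIV. M$fst p$fst q * N$snd p$snd q * (M'$fst q$fst r * N'$snd q$snd r) * s$r)"
      by (simp add: tensor_op_def sum_distrib_left mult_ac)
    also have "\<dots> = (\<Sum>r\<in>UNIV. \<Sum>q\<in>UNIV. M$fst p$fst q * N$snd p$snd q * (M'$fst q$fst r * N'$snd q$snd r) * s$r)"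
      by (rule sum.swap)
    finally show ?thesis by (simp add: tensor_op_def factor sum_distrib_right)
  qed
  then show ?thesis by (simp add: vec_eq_iff)
qed

lemma schmidt_rank_tensor_op_le_left:
  fixes M :: "complex^'a::finite^'a" and N :: "complex^'b::finite^'b"
  shows "schmidt_rank (tensor_op M N s) \<le> col_rank M"
proof -
  obtain B g where "B \<subseteq> columns M" "vec.independent B" and fin: "finite B"
    and card: "card B = col_rank M" and M: "\<And>i j. M$i$j = (\<Sum>b\<in>B. g b j * b$i)"
    by (fact column_basis_factorization)
  define w where "w b = (\<chi> j. \<Sum>q\<in>UNIV. g b (fst q) * N$j$snd q * s$q)" for b
  have "(tensor_op M N s)$p = (\<Sum>b\<in>B. tensor_vec b (w b))$p" for p
  proof -
    have "(tensor_op M N s)$p = (\<Sum>q\<in>UNIV. \<Sum>b\<in>B. b$fst p * (g b (fst q) * N$snd p$snd q * s$q))"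
      by (simp add: tensor_op_def M sum_distrib_right sum_distrib_left mult_ac)
    also have "\<dots> = (\<Sum>b\<in>B. \<Sum>q\<in>UNIV. b$fst p * (g b (fst q) * N$snd p$snd q * s$q))"
      by (rule sum.swap)
    finally show ?thesis by (simp add: tensor_vec_def w_def sum_component sum_distrib_left)
  qed
  then have "tensor_op M N s = (\<Sum>b\<in>B. tensor_vec b (w b))" by (simp add: vec_eq_iff)
  then show ?thesis unfolding card[symmetric] by (rule schmidt_rank_le_card[OF fin])
qed

lemma schmidt_rank_tensor_op_le_right:
  fixes M :: "complex^'a::finite^'a" and N :: "complex^'b::finite^'b"
  shows "schmidt_rank (tensor_op M N s) \<le> col_rank N"
proof -
  obtain B g where "B \<subseteq> columns N" "vec.independent B" and fin: "finite B"
    and card: "card B = col_rank N" and N: "\<And>i j. N$i$j = (\<Sum>b\<in>B. g b j * b$i)"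
    by (fact column_basis_factorization)
  define w where "w b = (\<chi> i. \<Sum>q\<in>UNIV. M$i$fst q * g b (snd q) * s$q)" for b
  have "(tensor_op M N s)$p = (\<Sum>b\<in>B. tensor_vec (w b) b)$p" for p
  proof -
    have "(tensor_op M N s)$p = (\<Sum>q\<in>UNIV. \<Sum>b\<in>B. M$fst p$fst q * g b (snd q) * s$q * b$snd p)"
      by (simp add: tensor_op_def N sum_distrib_right sum_distrib_left mult_ac)
    also have "\<dots> = (\<Sum>b\<in>B. \<Sum>q\<in>UNIV. M$fst p$fst q * g b (snd q) * s$q * b$snd p)"
      by (rule sum.swap)
    finally show ?thesis by (simp add: tensor_vec_def w_def sum_component sum_distrib_right)
  qed
  then have "tensor_op M N s = (\<Sum>b\<in>B. tensor_vec (w b) b)" by (simp add: vec_eq_iff)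
  then show ?thesis unfolding card[symmetric] by (rule schmidt_rank_le_card[OF fin])
qed

lemma schmidt_rank_le_projected:
  fixes P :: "complex^'a::finite^'a" and Q :: "complex^'b::finite^'b"
  shows "schmidt_rank s \<le> schmidt_rank (tensor_op P Q s) + col_rank (mat 1 - P) + col_rank (mat 1 - Q)"
proof -
  have "tensor_op P Q s + tensor_op (mat 1 - P) Q s = tensor_op (mat 1) Q s"
    by (simp flip: tensor_op_add_left)
  moreover have "tensor_op (mat 1) Q s + tensor_op (mat 1) (mat 1 - Q) s = s"
    by (simp add: tensor_op_mat_1 flip: tensor_op_add_right)
  ultimately have decomp:
    "s = tensor_op P Q s + tensor_op (mat 1 - P) Q s + tensor_op (mat 1) (mat 1 - Q) s"
    by simp
  have "schmidt_rank s \<le> schmidt_rank (tensor_op P Q s + tensor_op (mat 1 - P) Q s)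
      + schmidt_rank (tensor_op (mat 1) (mat 1 - Q) s)"
    by (subst decomp) (rule schmidt_rank_add_le)
  also have "\<dots> \<le> schmidt_rank (tensor_op P Q s) + schmidt_rank (tensor_op (mat 1 - P) Q s)
      + schmidt_rank (tensor_op (mat 1) (mat 1 - Q) s)"
    using schmidt_rank_add_le by simp
  finally show ?thesis
    using schmidt_rank_tensor_op_le_left[of "mat 1 - P" Q s]
      schmidt_rank_tensor_op_le_right[of "mat 1" "mat 1 - Q" s] by linarith
qed

lemma cinner_vec_sum_right: "cinner_vec x (\<Sum>a\<in>A. f a) = (\<Sum>a\<in>A. cinner_vec x (f a))"
  unfolding cinner_vec_def by (simp add: sum_component sum_distrib_left sum.swap[of _ A])

lemma cinner_vec_self: "cinner_vec x x = of_real ((norm x)\<^sup>2)"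
proof -
  have "cinner_vec x x = (\<Sum>i\<in>UNIV. of_real ((norm (x$i))\<^sup>2))"
    unfolding cinner_vec_def by (intro sum.cong refl) (metis complex_norm_square mult.commute)
  also have "\<dots> = of_real ((norm x)\<^sup>2)"
    by (simp add: norm_vec_def L2_set_def sum_nonneg)
  finally show ?thesis .
qed

lemma cinner_vec_tensor_op:
  "cinner_vec x (tensor_op M N y) = cinner_vec (tensor_op (mat_adj M) (mat_adj N) x) y"
proof -
  have "cinner_vec x (tensor_op M N y)
      = (\<Sum>p\<in>UNIV. \<Sum>q\<in>UNIV. cnj (x$p) * M$fst p$fst q * N$snd p$snd q * y$q)"
    by (simp add: cinner_vec_def tensor_op_def sum_distrib_left mult_ac)
  also have "\<dots> = (\<Sum>q\<in>UNIV. \<Sum>p\<in>UNIV. cnj (x$p) * M$fst p$fst q * N$snd p$snd q * y$q)"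
    by (rule sum.swap)
  also have "\<dots> = cinner_vec (tensor_op (mat_adj M) (mat_adj N) x) y"
    by (simp add: cinner_vec_def tensor_op_def mat_adj_def sum_distrib_right sum_distrib_left mult_ac)
  finally show ?thesis .
qed

lemma cinner_vec_tensor_op_projectors:
  assumes "orth_projector P" and "orth_projector Q"
  shows "cinner_vec s (tensor_op P Q s) = of_real ((norm (tensor_op P Q s))\<^sup>2)"
proof -
  have P: "P ** P = P" "mat_adj P = P" and Q: "Q ** Q = Q" "mat_adj Q = Q"
    using assms by (auto simp: orth_projector_def)
  have "cinner_vec s (tensor_op P Q s) = cinner_vec s (tensor_op P Q (tensor_op P Q s))"
    by (simp add: tensor_op_tensor_op P Q)
  also have "\<dots> = cinner_vec (tensor_op P Q s) (tensor_op P Q s)"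
    by (simp add: cinner_vec_tensor_op P Q)
  finally show ?thesis by (simp add: cinner_vec_self)
qed

lemma sum_cinner_vec_tensor_op_resolution:
  assumes "(\<Sum>a\<in>A. P a) = mat 1" and "(\<Sum>b\<in>B. Q b) = mat 1"
  shows "(\<Sum>a\<in>A. \<Sum>b\<in>B. cinner_vec s (tensor_op (P a) (Q b) s)) = of_real ((norm s)\<^sup>2)"
proof -
  have "(\<Sum>a\<in>A. \<Sum>b\<in>B. cinner_vec s (tensor_op (P a) (Q b) s))
      = cinner_vec s (tensor_op (\<Sum>a\<in>A. P a) (\<Sum>b\<in>B. Q b) s)"
    by (simp only: tensor_op_sum_left tensor_op_sum_right cinner_vec_sum_right) (rule sum.swap)
  then show ?thesis by (simp add: assms tensor_op_mat_1 cinner_vec_self)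
qed

lemma outcome_weighted_rank_drop_le:
  fixes P :: "complex^'a::finite^'a" and Q :: "complex^'b::finite^'b"
    and s :: "complex^('a \<times> 'b)"
  assumes P: "orth_projector P" and Q: "orth_projector Q"
  defines "p \<equiv> cinner_vec s (tensor_op P Q s)"
  shows "Re p * (real (schmidt_rank s) - real (schmidt_rank (tensor_op P Q s)))
         \<le> Re p * real (CARD('a) + CARD('b)) - Re (p * (trace P + trace Q))"
proof -
  define r where "r = (norm (tensor_op P Q s))\<^sup>2"
  define t where "t = real CARD('a) - col_rank (mat 1 - P) + (real CARD('b) - col_rank (mat 1 - Q))"
  have p: "p = of_real r" and "0 \<le> r"
    unfolding p_def r_def by (simp_all add: cinner_vec_tensor_op_projectors P Q)
  have "trace P + trace Q = of_real t"
    using P Q by (simp add: t_def orth_projector_def trace_idempotent_complement)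
  moreover have "real (schmidt_rank s) - real (schmidt_rank (tensor_op P Q s))
      \<le> real (CARD('a) + CARD('b)) - t"
    using schmidt_rank_le_projected[of s P Q] by (simp add: t_def)
  then have "r * (real (schmidt_rank s) - real (schmidt_rank (tensor_op P Q s)))
      \<le> r * (real (CARD('a) + CARD('b)) - t)"
    using \<open>0 \<le> r\<close> by (rule mult_left_mono)
  ultimately show ?thesis by (simp add: p right_diff_distrib)
qed

theorem mainTheorem11:
  fixes PA :: "nat \<Rightarrow> complex^'a^'a" and PB :: "nat \<Rightarrow> complex^'b^'b"
    and nA nB :: nat and s :: "complex^('a \<times> 'b)"
  assumes projA: "\<And>a. a < nA \<Longrightarrow> orth_projector (PA a)"
    and orthA: "\<And>a c. a < nA \<Longrightarrow> c < nA \<Longrightarrow> PA a ** PA c = (if a = c then PA a else 0)"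
    and completeA: "(\<Sum>a<nA. PA a) = mat 1"
    and projB: "\<And>b. b < nB \<Longrightarrow> orth_projector (PB b)"
    and orthB: "\<And>b d. b < nB \<Longrightarrow> d < nB \<Longrightarrow> PB b ** PB d = (if b = d then PB b else 0)"
    and completeB: "(\<Sum>b<nB. PB b) = mat 1"
    and unit: "norm s = 1"
  shows "(\<Sum>a<nA. \<Sum>b<nB.
            Re (cinner_vec s (tensor_op (PA a) (PB b) s)) *
            (real (schmidt_rank s) - real (schmidt_rank (tensor_op (PA a) (PB b) s))))
         \<le> real (CARD('a) + CARD('b)) -
           (\<Sum>a<nA. \<Sum>b<nB.
            Re (cinner_vec s (tensor_op (PA a) (PB b) s) * (trace (PA a) + trace (PB b))))"
proof -
  \<comment> \<open>The bound holds term by term.\<close>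
  let ?p = "\<lambda>a b. cinner_vec s (tensor_op (PA a) (PB b) s)"
  define D where "D = real (CARD('a) + CARD('b))"
  have "(\<Sum>a<nA. \<Sum>b<nB. ?p a b) = 1"
    using sum_cinner_vec_tensor_op_resolution[OF completeA completeB, of s] unit by simp
  from arg_cong[OF this, of Re] have total: "(\<Sum>a<nA. \<Sum>b<nB. Re (?p a b)) = 1"
    by (simp add: Re_sum)
  have "(\<Sum>a<nA. \<Sum>b<nB.
            Re (?p a b) * (real (schmidt_rank s) - real (schmidt_rank (tensor_op (PA a) (PB b) s))))
      \<le> (\<Sum>a<nA. \<Sum>b<nB. Re (?p a b) * D - Re (?p a b * (trace (PA a) + trace (PB b))))"
    unfolding D_def by (intro sum_mono outcome_weighted_rank_drop_le projA projB) auto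
  also have "\<dots> = D * (\<Sum>a<nA. \<Sum>b<nB. Re (?p a b))
      - (\<Sum>a<nA. \<Sum>b<nB. Re (?p a b * (trace (PA a) + trace (PB b))))"
    by (simp add: sum_subtractf sum_distrib_left mult.commute)
  finally show ?thesis by (simp add: total D_def)
qed

end
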